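(* Let $R$ be a ring, $S_0(R)$ its largest left regular denominator set and $Q_l(R)=S_0(R)^{-1}R$, with group of units $Q_l(R)^*$. Then: (1) $S_0(Q_l(R))=Q_l(R)^*$ and $S_0(Q_l(R))\cap R=S_0(R)$. (2) $Q_l(R)^*$ is the group generated by $S_0(R)$ and $S_0(R)^{-1}:=\{s^{-1}\mid s\in S_0(R)\}$. (3) $Q_l(R)^*=\{s^{-1}t\mid s,t\in S_0(R)\}$. (4) $Q_l(Q_l(R))=Q_l(R)$.
   Context: Rings are associative with $1$. A multiplicatively closed subset $S\subseteq R$ ($1\in S$, $0\notin S$, closed under products) is a left Ore set if $Sr\cap Rs\neq\emptyset$ for all $r\in R,s\in S$; $\mathrm{ass}(S):=\{r\mid sr=0\text{ for some }s\in S\}$. A left Ore set is a left denominator set if $rs=0$ ($r\in R,s\in S$) implies $tr=0$ for some $t\in S$. $\mathrm{Den}_l(R,0)$ denotes the set of left denominator sets $S$ with $\mathrm{ass}(S)=0$; it has a largest element under inclusion, denoted $S_0(R)$ (the largest left regular denominator set), and $Q_l(R):=S_0(R)^{-1}R$ is the largest left quotient ring of $R$; $R$ is regarded as a subring of $Q_l(R)$. For any ring $A$, $S_0(A)$ and $Q_l(A)$ are defined in the same way, so $Q_l(R)\subseteq Q_l(Q_l(R))$ naturally. *)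

theory Defs
  imports "HOL-Algebra.Algebra"
begin

definition mult_closed_set :: "('a, 'b) ring_scheme \<Rightarrow> 'a set \<Rightarrow> bool" where
  "mult_closed_set R S \<longleftrightarrow> S \<subseteq> carrier R \<and> \<one>\<^bsub>R\<^esub> \<in> S \<and> \<zero>\<^bsub>R\<^esub> \<notin> S \<and>
     (\<forall>s\<in>S. \<forall>t\<in>S. s \<otimes>\<^bsub>R\<^esub> t \<in> S)"

definition left_Ore_set :: "('a, 'b) ring_scheme \<Rightarrow> 'a set \<Rightarrow> bool" where
  "left_Ore_set R S \<longleftrightarrow> mult_closed_set R S \<and>
     (\<forall>r\<in>carrier R. \<forall>s\<in>S. \<exists>s'\<in>S. \<exists>r'\<in>carrier R. s' \<otimes>\<^bsub>R\<^esub> r = r' \<otimes>\<^bsub>R\<^esub> s)"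

definition ass :: "('a, 'b) ring_scheme \<Rightarrow> 'a set \<Rightarrow> 'a set" where
  "ass R S = {r \<in> carrier R. \<exists>s\<in>S. s \<otimes>\<^bsub>R\<^esub> r = \<zero>\<^bsub>R\<^esub>}"

definition left_denominator_set :: "('a, 'b) ring_scheme \<Rightarrow> 'a set \<Rightarrow> bool" where
  "left_denominator_set R S \<longleftrightarrow> left_Ore_set R S \<and>
     (\<forall>r\<in>carrier R. \<forall>s\<in>S. r \<otimes>\<^bsub>R\<^esub> s = \<zero>\<^bsub>R\<^esub> \<longrightarrow> (\<exists>t\<in>S. t \<otimes>\<^bsub>R\<^esub> r = \<zero>\<^bsub>R\<^esub>))"

definition Den_l_0 :: "('a, 'b) ring_scheme \<Rightarrow> 'a set set" where
  "Den_l_0 R = {S. left_denominator_set R S \<and> ass R S = {\<zero>\<^bsub>R\<^esub>}}"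

definition S0 :: "('a, 'b) ring_scheme \<Rightarrow> 'a set" where
  "S0 R = (THE S. S \<in> Den_l_0 R \<and> (\<forall>T\<in>Den_l_0 R. T \<subseteq> S))"

text \<open>(Q, phi) is a left ring of fractions S^{-1}R of R at the left denominator set S
 (characterisation up to unique isomorphism): phi is a ring homomorphism, the
 images of elements of S are units, every element has the form phi(s)^{-1} phi(r),
 and the kernel of phi is ass(S).\<close>
definition left_ring_of_fractions ::
  "('a, 'b) ring_scheme \<Rightarrow> 'a set \<Rightarrow> ('c, 'd) ring_scheme \<Rightarrow> ('a \<Rightarrow> 'c) \<Rightarrow> bool" where
  "left_ring_of_fractions R S Q \<phi> \<longleftrightarrow> ring Q \<and> \<phi> \<in> ring_hom R Q \<and>
     (\<forall>s\<in>S. \<phi> s \<in> Units Q) \<and>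
     (\<forall>q\<in>carrier Q. \<exists>s\<in>S. \<exists>r\<in>carrier R. q = inv\<^bsub>Q\<^esub> (\<phi> s) \<otimes>\<^bsub>Q\<^esub> \<phi> r) \<and>
     (\<forall>r\<in>carrier R. \<phi> r = \<zero>\<^bsub>Q\<^esub> \<longleftrightarrow> r \<in> ass R S)"

end

theory Submission
  imports Defs
begin

text \<open>The largest left regular denominator set exists because the submonoid generated by any
  family of left regular denominator sets is again one (the Ore condition need only be checked on
  generators). The key fact is that the preimage under \<open>\<phi>\<close> of a left regular denominator set
  \<open>S'\<close> of \<open>Q\<close> containing all units is one of \<open>R\<close>, hence lies in \<open>S\<^sub>0(R)\<close>. Writing
  \<open>\<sigma> \<in> S'\<close> as \<open>\<phi>(a)\<^sup>-\<^sup>1\<phi>(b)\<close>, the numerator \<open>\<phi>(b) = \<phi>(a)\<sigma>\<close> lies in \<open>S'\<close>, so \<open>b \<in> S\<^sub>0(R)\<close>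
  and \<open>\<sigma>\<close> is a unit. With \<open>S' = S\<^sub>0(Q)\<close> this gives \<open>S\<^sub>0(Q) = Q\<^sup>*\<close>, and with \<open>S' = Q\<^sup>*\<close> it gives
  \<open>\<phi>\<^sup>-\<^sup>1(Q\<^sup>*) = S\<^sub>0(R)\<close>, whence every unit is a fraction of elements of \<open>S\<^sub>0(R)\<close>. Localising
  at units changes nothing, which is (4).\<close>

definition regular :: "('a, 'b) ring_scheme \<Rightarrow> 'a \<Rightarrow> bool" where
  "regular R x \<longleftrightarrow> x \<in> carrier R
     \<and> (\<forall>r\<in>carrier R. x \<otimes>\<^bsub>R\<^esub> r = \<zero>\<^bsub>R\<^esub> \<longrightarrow> r = \<zero>\<^bsub>R\<^esub>)
     \<and> (\<forall>r\<in>carrier R. r \<otimes>\<^bsub>R\<^esub> x = \<zero>\<^bsub>R\<^esub> \<longrightarrow> r = \<zero>\<^bsub>R\<^esub>)"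

lemma regularI:
  assumes "x \<in> carrier R"
    and "\<And>r. r \<in> carrier R \<Longrightarrow> x \<otimes>\<^bsub>R\<^esub> r = \<zero>\<^bsub>R\<^esub> \<Longrightarrow> r = \<zero>\<^bsub>R\<^esub>"
    and "\<And>r. r \<in> carrier R \<Longrightarrow> r \<otimes>\<^bsub>R\<^esub> x = \<zero>\<^bsub>R\<^esub> \<Longrightarrow> r = \<zero>\<^bsub>R\<^esub>"
  shows "regular R x"
  using assms unfolding regular_def by blast

lemma regular_closed: "regular R x \<Longrightarrow> x \<in> carrier R"
  unfolding regular_def by blast

lemma regular_left_zero: "regular R x \<Longrightarrow> r \<in> carrier R \<Longrightarrow> x \<otimes>\<^bsub>R\<^esub> r = \<zero>\<^bsub>R\<^esub> \<Longrightarrow> r = \<zero>\<^bsub>R\<^esub>"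
  unfolding regular_def by blast

lemma regular_right_zero: "regular R x \<Longrightarrow> r \<in> carrier R \<Longrightarrow> r \<otimes>\<^bsub>R\<^esub> x = \<zero>\<^bsub>R\<^esub> \<Longrightarrow> r = \<zero>\<^bsub>R\<^esub>"
  unfolding regular_def by blast

lemma ass_subset_zero:
  assumes "\<And>s. s \<in> S \<Longrightarrow> regular R s"
  shows "ass R S \<subseteq> {\<zero>\<^bsub>R\<^esub>}"
proof
  fix r assume "r \<in> ass R S"
  then obtain s where "s \<in> S" "r \<in> carrier R" "s \<otimes>\<^bsub>R\<^esub> r = \<zero>\<^bsub>R\<^esub>"
    unfolding ass_def by blast
  then show "r \<in> {\<zero>\<^bsub>R\<^esub>}" using regular_left_zero[OF assms] by blast
qed

inductive_set submonoid_gen :: "('a, 'b) monoid_scheme \<Rightarrow> 'a set \<Rightarrow> 'a set" for M A where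
  one: "\<one>\<^bsub>M\<^esub> \<in> submonoid_gen M A"
| mult: "a \<in> A \<Longrightarrow> x \<in> submonoid_gen M A \<Longrightarrow> a \<otimes>\<^bsub>M\<^esub> x \<in> submonoid_gen M A"

context monoid
begin

lemma submonoid_gen_closed: "x \<in> submonoid_gen G A \<Longrightarrow> A \<subseteq> carrier G \<Longrightarrow> x \<in> carrier G"
  by (induction x rule: submonoid_gen.induct) auto

lemma submonoid_gen_incl: "A \<subseteq> carrier G \<Longrightarrow> a \<in> A \<Longrightarrow> a \<in> submonoid_gen G A"
  using submonoid_gen.mult[OF _ submonoid_gen.one, of a A G] by auto

lemma submonoid_gen_m_closed:
  assumes "A \<subseteq> carrier G" "x \<in> submonoid_gen G A" "y \<in> submonoid_gen G A"
  shows "x \<otimes> y \<in> submonoid_gen G A"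
  using assms(2)
proof (induction x rule: submonoid_gen.induct)
  case one
  then show ?case using assms submonoid_gen_closed by simp
next
  case (mult a x)
  then have "a \<otimes> x \<otimes> y = a \<otimes> (x \<otimes> y)"
    using assms submonoid_gen_closed by (auto intro: m_assoc)
  with mult show ?case by (simp add: submonoid_gen.mult)
qed

end

lemma S0_eqI:
  assumes "S \<in> Den_l_0 R" and "\<And>T. T \<in> Den_l_0 R \<Longrightarrow> T \<subseteq> S"
  shows "S0 R = S"
  unfolding S0_def by (rule the_equality) (use assms in blast)+

context ring
begin

lemma zero_in_ass: "\<one> \<in> S \<Longrightarrow> \<zero> \<in> ass R S"
  unfolding ass_def by force

lemma regular_one: "regular R \<one>"
  by (rule regularI) auto

lemma regular_m_closed:
  assumes x: "regular R x" and y: "regular R y"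
  shows "regular R (x \<otimes> y)"
proof (rule regularI)
  have xc: "x \<in> carrier R" and yc: "y \<in> carrier R"
    using x y by (auto dest: regular_closed)
  then show "x \<otimes> y \<in> carrier R" by simp
  show "r = \<zero>" if r: "r \<in> carrier R" "x \<otimes> y \<otimes> r = \<zero>" for r
  proof -
    have "x \<otimes> (y \<otimes> r) = \<zero>" using r xc yc by (simp add: m_assoc)
    then have "y \<otimes> r = \<zero>" using regular_left_zero[OF x] r(1) yc by simp
    then show ?thesis using regular_left_zero[OF y] r(1) by simp
  qed
  show "r = \<zero>" if r: "r \<in> carrier R" "r \<otimes> (x \<otimes> y) = \<zero>" for r
  proof -
    have "r \<otimes> x \<otimes> y = \<zero>" using r xc yc by (simp add: m_assoc)
    then have "r \<otimes> x = \<zero>" using regular_right_zero[OF y] r(1) xc by simp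
    then show ?thesis using regular_right_zero[OF x] r(1) by simp
  qed
qed

lemma regular_nonzero:
  assumes "\<one> \<noteq> \<zero>" and "regular R x"
  shows "x \<noteq> \<zero>"
proof
  assume "x = \<zero>"
  then have "\<one> = \<zero>" by (intro regular_right_zero[OF assms(2) one_closed]) simp
  with assms(1) show False ..
qed

lemma Units_regular:
  assumes u: "u \<in> Units R"
  shows "regular R u"
proof (rule regularI)
  show uc: "u \<in> carrier R" using u by blast
  show "r = \<zero>" if "r \<in> carrier R" "u \<otimes> r = \<zero>" for r
    using that u uc by (metis Units_l_cancel r_null zero_closed)
  show "r = \<zero>" if r: "r \<in> carrier R" "r \<otimes> u = \<zero>" for r
  proof -
    have "r = r \<otimes> u \<otimes> inv u" using r(1) u by (simp add: m_assoc Units_closed)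
    also have "\<dots> = \<zero>" using r u by simp
    finally show ?thesis .
  qed
qed

lemma Den_l_0_iff: "S \<in> Den_l_0 R \<longleftrightarrow> left_Ore_set R S \<and> (\<forall>s\<in>S. regular R s)"
proof
  assume "S \<in> Den_l_0 R"
  then have den: "left_denominator_set R S" and ass: "ass R S = {\<zero>}"
    by (simp_all add: Den_l_0_def)
  then have Ore: "left_Ore_set R S" by (simp add: left_denominator_set_def)
  have "regular R s" if s: "s \<in> S" for s
  proof (rule regularI)
    have "S \<subseteq> carrier R" using Ore by (simp add: left_Ore_set_def mult_closed_set_def)
    with s show "s \<in> carrier R" by blast
    show "r = \<zero>" if "r \<in> carrier R" "s \<otimes> r = \<zero>" for r
    proof -
      have "r \<in> ass R S" using that s unfolding ass_def by blast
      with ass show ?thesis by simp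
    qed
    show "r = \<zero>" if r: "r \<in> carrier R" "r \<otimes> s = \<zero>" for r
    proof -
      obtain t where "t \<in> S" "t \<otimes> r = \<zero>"
        using den r s unfolding left_denominator_set_def by blast
      then have "r \<in> ass R S" using r(1) unfolding ass_def by blast
      with ass show ?thesis by simp
    qed
  qed
  with Ore show "left_Ore_set R S \<and> (\<forall>s\<in>S. regular R s)" by blast
next
  assume "left_Ore_set R S \<and> (\<forall>s\<in>S. regular R s)"
  then have Ore: "left_Ore_set R S" and reg: "\<And>s. s \<in> S \<Longrightarrow> regular R s" by auto
  have one: "\<one> \<in> S" using Ore by (simp add: left_Ore_set_def mult_closed_set_def)
  have "left_denominator_set R S"
    unfolding left_denominator_set_def
  proof (intro conjI Ore ballI impI)
    fix r s assume "r \<in> carrier R" "s \<in> S" "r \<otimes> s = \<zero>"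
    then have "r = \<zero>" using regular_right_zero[OF reg] by blast
    with one show "\<exists>t\<in>S. t \<otimes> r = \<zero>" by (intro bexI[of _ \<one>]) simp_all
  qed
  moreover have "ass R S = {\<zero>}"
    using ass_subset_zero[OF reg] zero_in_ass[OF one] by blast
  ultimately show "S \<in> Den_l_0 R" by (simp add: Den_l_0_def)
qed

lemma Den_l_0_subset: "S \<in> Den_l_0 R \<Longrightarrow> S \<subseteq> carrier R"
  by (simp add: Den_l_0_iff left_Ore_set_def mult_closed_set_def)

lemma Den_l_0_zero: "S \<in> Den_l_0 R \<Longrightarrow> \<zero> \<notin> S"
  by (simp add: Den_l_0_iff left_Ore_set_def mult_closed_set_def)

lemma Den_l_0_regular: "S \<in> Den_l_0 R \<Longrightarrow> s \<in> S \<Longrightarrow> regular R s"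
  by (simp add: Den_l_0_iff)

lemma Den_l_0_m_closed: "S \<in> Den_l_0 R \<Longrightarrow> s \<in> S \<Longrightarrow> t \<in> S \<Longrightarrow> s \<otimes> t \<in> S"
  by (simp add: Den_l_0_iff left_Ore_set_def mult_closed_set_def)

lemma Den_l_0_Ore:
  "S \<in> Den_l_0 R \<Longrightarrow> r \<in> carrier R \<Longrightarrow> s \<in> S \<Longrightarrow> \<exists>s'\<in>S. \<exists>r'\<in>carrier R. s' \<otimes> r = r' \<otimes> s"
  by (simp add: Den_l_0_iff left_Ore_set_def)

lemma Units_Den_l_0:
  assumes "\<one> \<noteq> \<zero>"
  shows "Units R \<in> Den_l_0 R"
proof -
  have Ore: "\<exists>s'\<in>Units R. \<exists>r'\<in>carrier R. s' \<otimes> r = r' \<otimes> s"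
    if r: "r \<in> carrier R" and s: "s \<in> Units R" for r s
  proof (intro bexI)
    show "\<one> \<otimes> r = r \<otimes> inv s \<otimes> s" using r s by (simp add: m_assoc Units_closed)
  qed (use r s in simp_all)
  have "\<zero> \<notin> Units R" using regular_nonzero[OF assms Units_regular] by blast
  then have "left_Ore_set R (Units R)"
    using Ore by (auto simp: left_Ore_set_def mult_closed_set_def)
  with Units_regular show ?thesis unfolding Den_l_0_iff by blast
qed

lemma submonoid_gen_regular:
  "x \<in> submonoid_gen R A \<Longrightarrow> \<forall>a\<in>A. regular R a \<Longrightarrow> regular R x"
  by (induction x rule: submonoid_gen.induct) (auto intro: regular_one regular_m_closed)

lemma submonoid_gen_Ore:
  assumes A: "A \<subseteq> carrier R"
    and Ore: "\<And>a r. a \<in> A \<Longrightarrow> r \<in> carrier R \<Longrightarrow>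
      \<exists>m\<in>submonoid_gen R A. \<exists>r'\<in>carrier R. m \<otimes> r = r' \<otimes> a"
    and x: "x \<in> submonoid_gen R A" and r: "r \<in> carrier R"
  shows "\<exists>m\<in>submonoid_gen R A. \<exists>r'\<in>carrier R. m \<otimes> r = r' \<otimes> x"
  using x r
proof (induction x arbitrary: r rule: submonoid_gen.induct)
  case one
  have "\<one> \<otimes> r = r \<otimes> \<one>" using one by simp
  then show ?case using one submonoid_gen.one by blast
next
  case (mult a y)
  obtain m1 r1 where m1: "m1 \<in> submonoid_gen R A" "r1 \<in> carrier R" "m1 \<otimes> r = r1 \<otimes> y"
    using mult.IH mult.prems by blast
  obtain m2 r2 where m2: "m2 \<in> submonoid_gen R A" "r2 \<in> carrier R" "m2 \<otimes> r1 = r2 \<otimes> a"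
    using Ore mult.hyps(1) m1(2) by blast
  have carr: "m1 \<in> carrier R" "m2 \<in> carrier R" "y \<in> carrier R" "a \<in> carrier R"
    using m1 m2 mult A submonoid_gen_closed by auto
  have "m2 \<otimes> m1 \<otimes> r = r2 \<otimes> (a \<otimes> y)"
    using carr m1 m2 mult.prems by (metis m_assoc)
  moreover have "m2 \<otimes> m1 \<in> submonoid_gen R A"
    using A m1 m2 by (simp add: submonoid_gen_m_closed)
  ultimately show ?case using m2(2) by blast
qed

lemma submonoid_gen_Union_Den_l_0:
  assumes nontriv: "\<one> \<noteq> \<zero>" and D: "\<D> \<subseteq> Den_l_0 R"
  shows "submonoid_gen R (\<Union>\<D>) \<in> Den_l_0 R"
proof -
  let ?M = "submonoid_gen R (\<Union>\<D>)"
  have A: "\<Union>\<D> \<subseteq> carrier R" using D Den_l_0_subset by blast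
  have reg: "regular R x" if "x \<in> ?M" for x
    using submonoid_gen_regular[OF that] D Den_l_0_regular by blast
  have Ore: "\<exists>m\<in>?M. \<exists>r'\<in>carrier R. m \<otimes> r = r' \<otimes> a"
    if a: "a \<in> \<Union>\<D>" and r: "r \<in> carrier R" for a r
  proof -
    obtain S where S: "S \<in> \<D>" "a \<in> S" using a by blast
    then obtain s' r' where "s' \<in> S" "r' \<in> carrier R" "s' \<otimes> r = r' \<otimes> a"
      using Den_l_0_Ore D r by blast
    then show ?thesis using S A submonoid_gen_incl by blast
  qed
  have "left_Ore_set R ?M"
    unfolding left_Ore_set_def mult_closed_set_def
  proof (intro conjI ballI subsetI)
    show "x \<in> carrier R" if "x \<in> ?M" for x using that A by (rule submonoid_gen_closed)
    show "\<one> \<in> ?M" by (rule submonoid_gen.one)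
    show "\<zero> \<notin> ?M" using reg regular_nonzero[OF nontriv] by blast
    show "s \<otimes> t \<in> ?M" if "s \<in> ?M" "t \<in> ?M" for s t
      using A that by (rule submonoid_gen_m_closed)
    show "\<exists>s'\<in>?M. \<exists>r'\<in>carrier R. s' \<otimes> r = r' \<otimes> s" if "r \<in> carrier R" "s \<in> ?M" for r s
      using submonoid_gen_Ore[OF A Ore that(2,1)] .
  qed
  with reg show ?thesis unfolding Den_l_0_iff by blast
qed

lemma
  assumes "\<one> \<noteq> \<zero>"
  shows S0_Den_l_0: "S0 R \<in> Den_l_0 R"
    and S0_largest: "T \<in> Den_l_0 R \<Longrightarrow> T \<subseteq> S0 R"
proof -
  let ?U = "\<Union>(Den_l_0 R)"
  have "submonoid_gen R ?U \<in> Den_l_0 R"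
    using submonoid_gen_Union_Den_l_0[OF assms] by blast
  moreover have "?U \<subseteq> submonoid_gen R ?U"
    using Den_l_0_subset by (blast intro: submonoid_gen_incl)
  ultimately have U: "?U \<in> Den_l_0 R" by (metis Union_upper subset_antisym)
  then have "S0 R = ?U" by (rule S0_eqI) blast
  with U show "S0 R \<in> Den_l_0 R" and "T \<in> Den_l_0 R \<Longrightarrow> T \<subseteq> S0 R" by auto
qed

lemma left_ring_of_fractions_id: "left_ring_of_fractions R (Units R) R id"
  unfolding left_ring_of_fractions_def
proof (intro conjI ballI)
  show "ring R" by (rule ring_axioms)
  show "id \<in> ring_hom R R" by simp
  show "\<exists>s\<in>Units R. \<exists>r\<in>carrier R. q = inv (id s) \<otimes> id r" if "q \<in> carrier R" for q
    using that by force
  have "ass R (Units R) = {\<zero>}"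
    using ass_subset_zero[OF Units_regular] zero_in_ass[OF Units_one_closed] by blast
  then show "(id r = \<zero>) = (r \<in> ass R (Units R))" for r by simp
qed auto

lemma left_ring_of_fractions_inj:
  assumes fr: "left_ring_of_fractions R S Q \<phi>" and ass: "ass R S \<subseteq> {\<zero>}"
  shows "inj_on \<phi> (carrier R)"
proof -
  have "ring Q" and hom: "\<phi> \<in> ring_hom R Q"
    and ker: "\<And>r. r \<in> carrier R \<Longrightarrow> \<phi> r = \<zero>\<^bsub>Q\<^esub> \<longleftrightarrow> r \<in> ass R S"
    using fr unfolding left_ring_of_fractions_def by blast+
  interpret \<phi>: ring_hom_ring R Q \<phi> using ring_hom_ringI2[OF ring_axioms \<open>ring Q\<close> hom] .
  have "a_kernel R Q \<phi> = {\<zero>}"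
  proof
    show "a_kernel R Q \<phi> \<subseteq> {\<zero>}" using ker ass unfolding a_kernel_def' by blast
    show "{\<zero>} \<subseteq> a_kernel R Q \<phi>" unfolding a_kernel_def' by simp
  qed
  then show ?thesis by (rule \<phi>.trivial_ker_imp_inj)
qed

lemma left_ring_of_fractions_Units_bij:
  assumes S: "S \<subseteq> Units R" and fr: "left_ring_of_fractions R S Q \<psi>"
  shows "bij_betw \<psi> (carrier R) (carrier Q)"
proof -
  have "ring Q" and hom: "\<psi> \<in> ring_hom R Q"
    and rep: "\<And>q. q \<in> carrier Q \<Longrightarrow> \<exists>s\<in>S. \<exists>r\<in>carrier R. q = inv\<^bsub>Q\<^esub> (\<psi> s) \<otimes>\<^bsub>Q\<^esub> \<psi> r"
    using fr unfolding left_ring_of_fractions_def by blast+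
  interpret Q: ring Q by fact
  interpret \<psi>: ring_hom_ring R Q \<psi> using ring_hom_ringI2[OF ring_axioms \<open>ring Q\<close> hom] .
  have "ass R S \<subseteq> {\<zero>}"
    using S by (intro ass_subset_zero Units_regular) blast
  with fr have "inj_on \<psi> (carrier R)" by (rule left_ring_of_fractions_inj)
  moreover have "\<psi> ` carrier R = carrier Q"
  proof
    show "carrier Q \<subseteq> \<psi> ` carrier R"
    proof
      fix q assume "q \<in> carrier Q"
      then obtain s r where sr: "s \<in> S" "r \<in> carrier R" "q = inv\<^bsub>Q\<^esub> (\<psi> s) \<otimes>\<^bsub>Q\<^esub> \<psi> r"
        using rep by blast
      have s: "s \<in> Units R" "s \<in> carrier R" "inv s \<in> carrier R" using S sr(1) by auto
      have "\<psi> (inv s) = inv\<^bsub>Q\<^esub> (\<psi> s)"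
      proof (rule Q.inv_char[symmetric])
        show "\<psi> s \<otimes>\<^bsub>Q\<^esub> \<psi> (inv s) = \<one>\<^bsub>Q\<^esub>" using s by (simp flip: \<psi>.hom_mult)
        show "\<psi> (inv s) \<otimes>\<^bsub>Q\<^esub> \<psi> s = \<one>\<^bsub>Q\<^esub>" using s by (simp flip: \<psi>.hom_mult)
      qed (use s in simp_all)
      then have "q = \<psi> (inv s \<otimes> r)" using sr s by simp
      then show "q \<in> \<psi> ` carrier R" using sr s by blast
    qed
  qed (intro image_subsetI ring_hom_closed[OF hom])
  ultimately show ?thesis by (simp add: bij_betw_def)
qed

end

locale left_regular_fractions = R: ring R + ring Q
  for R :: "('a, 'b) ring_scheme" and Q :: "('c, 'd) ring_scheme" (structure) +
  fixes S :: "'a set" and \<phi> :: "'a \<Rightarrow> 'c"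
  assumes nontrivial: "\<one>\<^bsub>R\<^esub> \<noteq> \<zero>\<^bsub>R\<^esub>"
    and S_Den_l_0: "S \<in> Den_l_0 R"
    and fractions: "left_ring_of_fractions R S Q \<phi>"
begin

sublocale \<phi>: ring_hom_ring R Q \<phi>
  using fractions R.ring_axioms ring_axioms
  by (simp add: ring_hom_ringI2 left_ring_of_fractions_def)

lemma S_subset: "S \<subseteq> carrier R"
  using S_Den_l_0 by (rule R.Den_l_0_subset)

lemma phi_S_Units: "s \<in> S \<Longrightarrow> \<phi> s \<in> Units Q"
  using fractions by (simp add: left_ring_of_fractions_def)

lemma fraction_rep:
  assumes "q \<in> carrier Q"
  obtains s r where "s \<in> S" "r \<in> carrier R" "q = inv (\<phi> s) \<otimes> \<phi> r" "\<phi> s \<otimes> q = \<phi> r"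
proof -
  obtain s r where sr: "s \<in> S" "r \<in> carrier R" "q = inv (\<phi> s) \<otimes> \<phi> r"
    using fractions assms unfolding left_ring_of_fractions_def by blast
  moreover have "\<phi> s \<otimes> q = \<phi> r"
    using sr phi_S_Units[OF sr(1)] by (simp add: m_assoc[symmetric] Units_closed)
  ultimately show thesis using that by blast
qed

lemma phi_inj: "inj_on \<phi> (carrier R)"
proof -
  have "ass R S \<subseteq> {\<zero>\<^bsub>R\<^esub>}" using S_Den_l_0 by (simp add: Den_l_0_def)
  with fractions show ?thesis by (rule R.left_ring_of_fractions_inj)
qed

lemma Q_nontrivial: "\<one> \<noteq> \<zero>"
  using nontrivial inj_onD[OF phi_inj, of "\<one>\<^bsub>R\<^esub>" "\<zero>\<^bsub>R\<^esub>"] by auto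

lemma regular_preimage:
  assumes r: "r \<in> carrier R" and reg: "regular Q (\<phi> r)"
  shows "regular R r"
proof (rule regularI[OF r])
  show "x = \<zero>\<^bsub>R\<^esub>" if x: "x \<in> carrier R" "r \<otimes>\<^bsub>R\<^esub> x = \<zero>\<^bsub>R\<^esub>" for x
  proof -
    have "\<phi> r \<otimes> \<phi> x = \<zero>" using x r by (metis \<phi>.hom_mult \<phi>.hom_zero)
    then have "\<phi> x = \<phi> \<zero>\<^bsub>R\<^esub>" using regular_left_zero[OF reg \<phi>.hom_closed[OF x(1)]] by simp
    then show ?thesis using x inj_onD[OF phi_inj] by blast
  qed
  show "x = \<zero>\<^bsub>R\<^esub>" if x: "x \<in> carrier R" "x \<otimes>\<^bsub>R\<^esub> r = \<zero>\<^bsub>R\<^esub>" for x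
  proof -
    have "\<phi> x \<otimes> \<phi> r = \<zero>" using x r by (metis \<phi>.hom_mult \<phi>.hom_zero)
    then have "\<phi> x = \<phi> \<zero>\<^bsub>R\<^esub>" using regular_right_zero[OF reg \<phi>.hom_closed[OF x(1)]] by simp
    then show ?thesis using x inj_onD[OF phi_inj] by blast
  qed
qed

text \<open>Ore data in \<open>Q\<close> are cleared of denominators from \<open>S\<close>; these are units and hence lie
  in \<open>S'\<close>.\<close>

lemma Den_l_0_preimage:
  assumes S': "S' \<in> Den_l_0 Q" and Units: "Units Q \<subseteq> S'"
  shows "{r \<in> carrier R. \<phi> r \<in> S'} \<in> Den_l_0 R" (is "?T \<in> _")
proof -
  have m_closed: "x \<otimes>\<^bsub>R\<^esub> y \<in> ?T" if "x \<in> ?T" "y \<in> ?T" for x y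
    using that Den_l_0_m_closed[OF S'] by simp
  have S_T: "s \<in> ?T" if s: "s \<in> S" for s
  proof -
    have "\<phi> s \<in> S'" using Units phi_S_Units[OF s] by blast
    with S_subset s show ?thesis by blast
  qed
  have Ore: "\<exists>t'\<in>?T. \<exists>r'\<in>carrier R. t' \<otimes>\<^bsub>R\<^esub> r = r' \<otimes>\<^bsub>R\<^esub> t"
    if r: "r \<in> carrier R" and t: "t \<in> ?T" for r t
  proof -
    obtain \<sigma> q where \<sigma>: "\<sigma> \<in> S'" "q \<in> carrier Q" "\<sigma> \<otimes> \<phi> r = q \<otimes> \<phi> t"
      using Den_l_0_Ore[OF S' \<phi>.hom_closed[OF r]] t by blast
    have \<sigma>_closed: "\<sigma> \<in> carrier Q" using \<sigma>(1) Den_l_0_subset[OF S'] by blast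
    obtain a b where ab: "a \<in> S" "b \<in> carrier R" "\<phi> a \<otimes> \<sigma> = \<phi> b"
      using fraction_rep[OF \<sigma>_closed] by metis
    have a_closed: "a \<in> carrier R" using ab(1) S_subset by blast
    have "\<phi> a \<otimes> q \<in> carrier Q" using a_closed \<sigma>(2) by simp
    then obtain c d where cd: "c \<in> S" "d \<in> carrier R" "\<phi> c \<otimes> (\<phi> a \<otimes> q) = \<phi> d"
      using fraction_rep by metis
    have c_closed: "c \<in> carrier R" using cd(1) S_subset by blast
    have "\<phi> a \<in> S'" using Units phi_S_Units[OF ab(1)] by blast
    then have "\<phi> b \<in> S'" using Den_l_0_m_closed[OF S' _ \<sigma>(1)] ab(3) by metis
    with ab(2) S_T[OF cd(1)] have cb: "c \<otimes>\<^bsub>R\<^esub> b \<in> ?T" by (intro m_closed) auto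
    have "\<phi> (c \<otimes>\<^bsub>R\<^esub> b \<otimes>\<^bsub>R\<^esub> r) = \<phi> c \<otimes> (\<phi> a \<otimes> (\<sigma> \<otimes> \<phi> r))"
      using ab(2) a_closed c_closed r \<sigma>_closed by (simp add: m_assoc flip: ab(3))
    also have "\<dots> = \<phi> c \<otimes> (\<phi> a \<otimes> q) \<otimes> \<phi> t"
      using \<sigma> a_closed c_closed t by (simp add: m_assoc)
    also have "\<dots> = \<phi> (d \<otimes>\<^bsub>R\<^esub> t)" using cd t by simp
    finally have "c \<otimes>\<^bsub>R\<^esub> b \<otimes>\<^bsub>R\<^esub> r = d \<otimes>\<^bsub>R\<^esub> t"
      using cb r cd(2) t by (intro inj_onD[OF phi_inj]) auto
    with cb cd(2) show ?thesis by blast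
  qed
  have "left_Ore_set R ?T"
    unfolding left_Ore_set_def mult_closed_set_def
  proof (intro conjI ballI subsetI)
    show "\<one>\<^bsub>R\<^esub> \<in> ?T" using Units by auto
    show "\<zero>\<^bsub>R\<^esub> \<notin> ?T" using Den_l_0_zero[OF S'] by simp
  qed (use m_closed Ore in auto)
  moreover have "regular R t" if t: "t \<in> ?T" for t
    using t regular_preimage Den_l_0_regular[OF S'] by blast
  ultimately show ?thesis unfolding R.Den_l_0_iff by blast
qed

end

locale largest_left_regular_fractions = left_regular_fractions +
  assumes S_largest: "T \<in> Den_l_0 R \<Longrightarrow> T \<subseteq> S"
begin

lemma Den_l_0_above_Units:
  assumes S': "S' \<in> Den_l_0 Q" and Units: "Units Q \<subseteq> S'"
  shows "S' = Units Q"
proof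
  show "S' \<subseteq> Units Q"
  proof
    fix \<sigma> assume \<sigma>: "\<sigma> \<in> S'"
    obtain a b where ab: "a \<in> S" "b \<in> carrier R" "\<sigma> = inv (\<phi> a) \<otimes> \<phi> b" "\<phi> a \<otimes> \<sigma> = \<phi> b"
      using fraction_rep \<sigma> S' Den_l_0_subset by blast
    have "\<phi> b \<in> S'"
      using ab(1,4) \<sigma> phi_S_Units Units Den_l_0_m_closed[OF S'] by (metis subsetD)
    then have "b \<in> S" using S_largest[OF Den_l_0_preimage[OF S' Units]] ab(2) by blast
    then show "\<sigma> \<in> Units Q" using ab(1,3) phi_S_Units by simp
  qed
qed (rule Units)

lemma S0_eq_Units: "S0 Q = Units Q"
  using Den_l_0_above_Units S0_Den_l_0[OF Q_nontrivial]
    S0_largest[OF Q_nontrivial Units_Den_l_0[OF Q_nontrivial]]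
  by blast

lemma preimage_Units: "{r \<in> carrier R. \<phi> r \<in> Units Q} = S"
  using S_largest[OF Den_l_0_preimage[OF Units_Den_l_0[OF Q_nontrivial] subset_refl]]
    phi_S_Units S_subset
  by blast

lemma Units_eq_fractions: "Units Q = {inv (\<phi> s) \<otimes> \<phi> t | s t. s \<in> S \<and> t \<in> S}"
proof
  show "Units Q \<subseteq> {inv (\<phi> s) \<otimes> \<phi> t | s t. s \<in> S \<and> t \<in> S}"
  proof
    fix u assume u: "u \<in> Units Q"
    then obtain s t where st: "s \<in> S" "t \<in> carrier R" "u = inv (\<phi> s) \<otimes> \<phi> t" "\<phi> s \<otimes> u = \<phi> t"
      using fraction_rep by blast
    have "t \<in> S" using preimage_Units st(1,2,4) u phi_S_Units by (metis (lifting) Units_m_closed mem_Collect_eq)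
    with st(1,3) show "u \<in> {inv (\<phi> s) \<otimes> \<phi> t | s t. s \<in> S \<and> t \<in> S}" by blast
  qed
qed (use phi_S_Units in auto)

lemma Units_eq_generate: "Units Q = generate (units_of Q) (\<phi> ` S \<union> (\<lambda>s. inv (\<phi> s)) ` S)"
  (is "_ = generate _ ?A")
proof
  have A: "?A \<subseteq> carrier (units_of Q)" using phi_S_Units by (auto simp: units_of_carrier)
  show "Units Q \<subseteq> generate (units_of Q) ?A"
  proof
    fix u assume "u \<in> Units Q"
    then obtain s t where st: "s \<in> S" "t \<in> S" "u = inv (\<phi> s) \<otimes> \<phi> t"
      using Units_eq_fractions by blast
    then have "inv (\<phi> s) \<otimes>\<^bsub>units_of Q\<^esub> \<phi> t \<in> generate (units_of Q) ?A"
      by (blast intro: generate.eng generate.incl)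
    then show "u \<in> generate (units_of Q) ?A" using st(3) by (simp add: units_of_mult)
  qed
  show "generate (units_of Q) ?A \<subseteq> Units Q"
    using group.generate_incl[OF units_group A] by (simp add: units_of_carrier)
qed

end

theorem theorem2p8:
  fixes R :: "('a, 'b) ring_scheme" and Q :: "('c, 'd) ring_scheme" and \<phi> :: "'a \<Rightarrow> 'c"
    and Q' :: "('e, 'f) ring_scheme" and \<psi> :: "'c \<Rightarrow> 'e"
  assumes "ring R"
    and "\<one>\<^bsub>R\<^esub> \<noteq> \<zero>\<^bsub>R\<^esub>"
    and "left_ring_of_fractions R (S0 R) Q \<phi>"
  shows "(S0 Q = Units Q \<and> {r \<in> carrier R. \<phi> r \<in> S0 Q} = S0 R)
    \<and> Units Q = generate (units_of Q) (\<phi> ` S0 R \<union> (\<lambda>s. inv\<^bsub>Q\<^esub> (\<phi> s)) ` S0 R)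
    \<and> Units Q = {inv\<^bsub>Q\<^esub> (\<phi> s) \<otimes>\<^bsub>Q\<^esub> \<phi> t | s t. s \<in> S0 R \<and> t \<in> S0 R}
    \<and> left_ring_of_fractions Q (S0 Q) Q id
    \<and> (left_ring_of_fractions Q (S0 Q) Q' \<psi> \<longrightarrow> bij_betw \<psi> (carrier Q) (carrier Q'))"
proof -
  interpret R: ring R by fact
  have "ring Q" using assms(3) by (simp add: left_ring_of_fractions_def)
  then interpret largest_left_regular_fractions R Q "S0 R" \<phi>
    by (intro largest_left_regular_fractions.intro left_regular_fractions.intro
        left_regular_fractions_axioms.intro largest_left_regular_fractions_axioms.intro)
      (use assms R.S0_Den_l_0 R.S0_largest in auto)
  show ?thesis
    using S0_eq_Units preimage_Units Units_eq_generate Units_eq_fractions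
      left_ring_of_fractions_id left_ring_of_fractions_Units_bij[of "Units Q" Q' \<psi>]
    by simp
qed

end
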